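(* Let $\Omega=\Omega_0\setminus\overline\Omega_1$ be a convex ring with $\infty$-harmonic potential $u$. For $x\in\Omega$ let $\Omega_{u(x)}=\{y\in\Omega_0:u(y)>u(x)\}$ and let $N_x$ be the set of unit vectors $\nu\in\mathbb R^n$ with $\nu\cdot(y-x)\le0$ for all $y\in\Omega_{u(x)}$. For a unit vector $\nu$ let $r_{x,\nu}\in(0,\infty)$ be the unique number with $x+r_{x,\nu}\nu\in\partial\Omega_0$. Then for every $x\in\Omega$: $$-Du(x)\cdot\nu\ \ge\ \frac{u(x)-u(x+r\nu)}{r}>0\qquad\forall\nu\in N_x,\ \forall r\in(0,r_{x,\nu}];$$ moreover $N_x=\{\nu_x\}$ with $\nu_x:=-Du(x)/|Du(x)|$; consequently $|Du(x)|\ge \frac{u(x)-u(x+r\nu_x)}{r}$ for all $r\in(0,r_{x,\nu_x}]$, and in particular $|Du(x)|\ge u(x)/r_{x,\nu_x}$.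
   Context: Let $n\ge 2$. A convex ring is a set $\Omega=\Omega_0\setminus\overline{\Omega}_1$, where $\Omega_0\subset\mathbb R^n$ is a bounded convex domain and $\overline\Omega_1\subset\Omega_0$ is a nonempty compact convex set (possibly with empty interior); $\partial\Omega_1$ denotes the boundary of $\overline\Omega_1$. The $\infty$-harmonic potential $u\in C^0(\overline\Omega)$ is the unique viscosity solution of $\langle D^2u\,Du,Du\rangle=0$ in $\Omega$ with $u=0$ on $\partial\Omega_0$, $u=1$ on $\partial\Omega_1$, extended by $1$ on $\overline\Omega_1$ and by $0$ outside $\Omega_0$. It is known that $u$ is differentiable at every point of $\Omega$ and that the super level sets $\{y\in\Omega_0:u(y)>t\}$ are convex. *)

theory Defs
  imports "HOL-Analysis.Analysis"
begin

definition grad :: "('a::euclidean_space \<Rightarrow> real) \<Rightarrow> 'a \<Rightarrow> 'a" where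
  "grad u x = (THE D. (u has_derivative (\<lambda>h. D \<bullet> h)) (at x))"

definition C2_test :: "('a::euclidean_space \<Rightarrow> real) \<Rightarrow> 'a \<Rightarrow> ('a \<Rightarrow> 'a) \<Rightarrow> ('a \<Rightarrow> 'a \<Rightarrow> 'a) \<Rightarrow> bool" where
  "C2_test phi x0 g H \<longleftrightarrow> (\<exists>e>0.
     (\<forall>y\<in>ball x0 e. (phi has_derivative (\<lambda>h. g y \<bullet> h)) (at y) \<and> (g has_derivative H y) (at y))
     \<and> (\<forall>v. continuous_on (ball x0 e) (\<lambda>y. H y v)))"

text \<open>Viscosity solution of the infinity Laplace equation  <D^2 u Du, Du> = 0  in U,
  with C2 test functions.\<close>
definition inf_harmonic_visc :: "('a::euclidean_space \<Rightarrow> real) \<Rightarrow> 'a set \<Rightarrow> bool" where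
  "inf_harmonic_visc u U \<longleftrightarrow> continuous_on U u \<and>
     (\<forall>x0\<in>U. \<forall>phi g H. C2_test phi x0 g H \<longrightarrow>
        (\<exists>e>0. \<forall>y\<in>ball x0 e \<inter> U. u y - phi y \<le> u x0 - phi x0) \<longrightarrow>
        H x0 (g x0) \<bullet> g x0 \<ge> 0) \<and>
     (\<forall>x0\<in>U. \<forall>phi g H. C2_test phi x0 g H \<longrightarrow>
        (\<exists>e>0. \<forall>y\<in>ball x0 e \<inter> U. u y - phi y \<ge> u x0 - phi x0) \<longrightarrow>
        H x0 (g x0) \<bullet> g x0 \<le> 0)"

definition exit_radius :: "'a::euclidean_space set \<Rightarrow> 'a \<Rightarrow> 'a \<Rightarrow> real" where
  "exit_radius \<Omega>0 x \<nu> = (THE r. 0 < r \<and> x + r *\<^sub>R \<nu> \<in> frontier \<Omega>0)"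

definition normal_set :: "('a::euclidean_space \<Rightarrow> real) \<Rightarrow> 'a set \<Rightarrow> 'a \<Rightarrow> 'a set" where
  "normal_set u \<Omega>0 x = {\<nu>. norm \<nu> = 1 \<and> (\<forall>y\<in>{y\<in>\<Omega>0. u y > u x}. \<nu> \<bullet> (y - x) \<le> 0)}"

end

theory Submission
  imports Defs
begin

text \<open>
  An \<infinity>-subharmonic function lies below every cone a + b|y - z| that dominates it on the boundary
  of a bounded region avoiding the vertex z; this comparison principle (proved with a slightly
  concave perturbation of the cone as test function) is all that is used.  It first gives
  0 < u < 1 in the ring.  If \<nu> is a unit outer normal of the convex super level set at x, the ball
  of radius r centred at x + r\<nu> touches that set only at x, so u \<le> u x on it, and comparing u on
  this ball with the cone through u(x + r\<nu>) and u x shows that u decreases at least linearly from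
  x along \<nu>.  This bounds -Du(x)\<bullet>\<nu> from below and in particular Du(x) \<noteq> 0.  Finally every
  normal \<nu> satisfies \<nu>\<bullet>w \<le> 0 for each ascent direction w of u at x, which forces
  \<nu> = -Du(x)/|Du(x)|.
\<close>

lemma grad_eqI:
  fixes u :: "'a::euclidean_space \<Rightarrow> real"
  assumes "(u has_derivative (\<lambda>h. D \<bullet> h)) (at x)"
  shows "grad u x = D"
  unfolding grad_def
proof (rule the_equality)
  fix E assume "(u has_derivative (\<lambda>h. E \<bullet> h)) (at x)"
  with assms have "(\<lambda>h. D \<bullet> h) = (\<lambda>h. E \<bullet> h)" by (rule has_derivative_unique)
  then have "(E - D) \<bullet> (E - D) = 0" by (simp add: fun_eq_iff inner_diff_left)
  then show "E = D" by simp
qed (fact assms)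

lemma has_derivative_grad:
  fixes u :: "'a::euclidean_space \<Rightarrow> real"
  assumes "u differentiable (at x)"
  shows "(u has_derivative (\<lambda>h. grad u x \<bullet> h)) (at x)"
proof -
  obtain f' where f': "(u has_derivative f') (at x)"
    using assms by (auto simp: differentiable_def)
  have "f' = (\<lambda>h. adjoint f' 1 \<bullet> h)"
    using adjoint_clauses(2)[OF has_derivative_linear[OF f'], of 1] by (simp add: fun_eq_iff)
  with f' show ?thesis by (metis grad_eqI)
qed

lemma has_real_derivative_along_line:
  fixes u :: "'a::euclidean_space \<Rightarrow> real"
  assumes "(u has_derivative (\<lambda>h. D \<bullet> h)) (at x)"
  shows "((\<lambda>s. u (x + s *\<^sub>R w)) has_real_derivative (D \<bullet> w)) (at 0)"
proof -
  have "((\<lambda>s. x + s *\<^sub>R w) has_derivative (\<lambda>s. s *\<^sub>R w)) (at 0)"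
    by (rule derivative_eq_intros | simp)+
  moreover have "(u has_derivative (\<lambda>h. D \<bullet> h)) (at (x + 0 *\<^sub>R w))"
    using assms by simp
  ultimately have "((\<lambda>s. u (x + s *\<^sub>R w)) has_derivative (\<lambda>s. D \<bullet> (s *\<^sub>R w))) (at 0)"
    by (rule has_derivative_compose)
  moreover have "(\<lambda>s. D \<bullet> (s *\<^sub>R w)) = (*) (D \<bullet> w)"
    by (simp add: fun_eq_iff)
  ultimately show ?thesis
    by (simp add: has_field_derivative_def)
qed

lemma has_real_derivative_le_of_slope_bound:
  fixes f :: "real \<Rightarrow> real"
  assumes f: "(f has_real_derivative f') (at 0)" and "0 < r"
    and slope: "\<And>e. 0 < e \<Longrightarrow> e \<le> r \<Longrightarrow> f e \<le> f 0 + c * e"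
  shows "f' \<le> c"
proof (rule tendsto_upperbound)
  show "((\<lambda>e. (f e - f 0) / (e - 0)) \<longlongrightarrow> f') (at_right 0)"
    using has_field_derivative_at_within[OF f] by (simp only: has_field_derivative_iff)
  show "\<forall>\<^sub>F e in at_right 0. (f e - f 0) / (e - 0) \<le> c"
    unfolding eventually_at_right_field
  proof (intro exI[of _ r] conjI allI impI)
    fix e :: real assume "0 < e" "e < r"
    then show "(f e - f 0) / (e - 0) \<le> c"
      using slope[of e] by (simp add: pos_divide_le_eq mult.commute)
  qed (fact \<open>0 < r\<close>)
qed simp

lemma unit_vector_eq_neg_direction:
  fixes D \<nu> :: "'a::real_inner"
  assumes "D \<noteq> 0" "norm \<nu> = 1" and ascent: "\<And>w. 0 < D \<bullet> w \<Longrightarrow> \<nu> \<bullet> w \<le> 0"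
  shows "\<nu> = - (1 / norm D) *\<^sub>R D"
proof -
  define e where "e = (1 / norm D) *\<^sub>R D"
  define w where "w = \<nu> + e"
  have "norm e = 1" using assms(1) by (simp add: e_def)
  then have "\<nu> \<bullet> \<nu> = 1" "e \<bullet> e = 1"
    using assms(2) by (simp_all add: norm_eq_1[symmetric])
  then have ww: "w \<bullet> w = 2 * (\<nu> \<bullet> w)" and ew: "e \<bullet> w = \<nu> \<bullet> w"
    by (simp_all add: w_def inner_add inner_commute)
  \<comment> \<open>Both the unit vectors \<nu> and e make the same angle with their sum w.\<close>
  have "w = 0"
  proof (rule ccontr)
    assume "w \<noteq> 0"
    then have "0 < \<nu> \<bullet> w" using ww inner_gt_zero_iff[of w] by linarith
    moreover have "D \<bullet> w = norm D * (\<nu> \<bullet> w)"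
      using ew assms(1) by (simp add: e_def field_simps)
    ultimately show False using ascent[of w] assms(1) by simp
  qed
  then show ?thesis by (simp add: w_def e_def eq_neg_iff_add_eq_0)
qed

lemma connected_ball_propagation:
  fixes U :: "'a::metric_space set"
  assumes "open U" "connected S" "S \<subseteq> U"
    and spread: "\<And>w \<rho> y. ball w \<rho> \<subseteq> U \<Longrightarrow> P w \<Longrightarrow> y \<in> ball w \<rho> \<Longrightarrow> P y"
  shows "(\<forall>y\<in>S. P y) \<or> (\<forall>y\<in>S. \<not> P y)"
proof -
  have "open {y\<in>U. P y}"
  proof (rule openI)
    fix y assume y: "y \<in> {y\<in>U. P y}"
    then obtain \<rho> where "0 < \<rho>" "ball y \<rho> \<subseteq> U"
      using \<open>open U\<close> open_contains_ball by blast
    with y spread show "\<exists>e>0. ball y e \<subseteq> {y\<in>U. P y}" by blast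
  qed
  moreover have "open {y\<in>U. \<not> P y}"
  proof (rule openI)
    fix y assume y: "y \<in> {y\<in>U. \<not> P y}"
    then obtain \<rho> where \<rho>: "0 < \<rho>" "ball y \<rho> \<subseteq> U"
      using \<open>open U\<close> open_contains_ball by blast
    \<comment> \<open>A point of ball y (\<rho>/2) where P held would spread P back to y.\<close>
    have "\<not> P q" if q: "q \<in> ball y (\<rho> / 2)" for q
    proof
      assume "P q"
      moreover have "ball q (\<rho> / 2) \<subseteq> ball y \<rho>"
      proof
        fix v assume "v \<in> ball q (\<rho> / 2)"
        then show "v \<in> ball y \<rho>"
          using q dist_triangle[of y v q] by simp
      qed
      moreover have "y \<in> ball q (\<rho> / 2)"
        using q by (simp add: dist_commute)
      ultimately show False
        using y \<rho>(2) spread[of q "\<rho> / 2" y] by blast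
    qed
    moreover have "ball y (\<rho> / 2) \<subseteq> U"
      using \<rho> subset_ball[of "\<rho> / 2" \<rho> y] by simp
    ultimately have "ball y (\<rho> / 2) \<subseteq> {y\<in>U. \<not> P y}"
      by blast
    with \<rho>(1) show "\<exists>e>0. ball y e \<subseteq> {y\<in>U. \<not> P y}"
      by (intro exI[of _ "\<rho> / 2"]) simp
  qed
  ultimately have "{y\<in>U. P y} \<inter> S = {} \<or> {y\<in>U. \<not> P y} \<inter> S = {}"
    using assms(2,3) by (intro connectedD) auto
  then show ?thesis using assms(3) by blast
qed

lemma ray_in_open_segment:
  fixes x \<nu> :: "'a::real_vector"
  assumes "\<nu> \<noteq> 0" "0 < s" "s < r"
  shows "x + s *\<^sub>R \<nu> \<in> open_segment x (x + r *\<^sub>R \<nu>)"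
  unfolding in_segment
proof (intro conjI exI[of _ "s / r"])
  show "x + s *\<^sub>R \<nu> = (1 - s / r) *\<^sub>R x + (s / r) *\<^sub>R (x + r *\<^sub>R \<nu>)"
    using assms by (simp add: algebra_simps)
qed (use assms in auto)

lemma exit_radius:
  fixes \<Omega>0 :: "'a::euclidean_space set"
  assumes "open \<Omega>0" "bounded \<Omega>0" "convex \<Omega>0" "x \<in> \<Omega>0" "\<nu> \<noteq> 0"
  shows "0 < exit_radius \<Omega>0 x \<nu>" and "x + exit_radius \<Omega>0 x \<nu> *\<^sub>R \<nu> \<in> frontier \<Omega>0"
    and "\<And>s. 0 \<le> s \<Longrightarrow> s < exit_radius \<Omega>0 x \<nu> \<Longrightarrow> x + s *\<^sub>R \<nu> \<in> \<Omega>0"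
proof -
  obtain d where d: "0 < d" "x + d *\<^sub>R \<nu> \<in> frontier \<Omega>0"
    and inside: "\<And>s. 0 \<le> s \<Longrightarrow> s < d \<Longrightarrow> x + s *\<^sub>R \<nu> \<in> \<Omega>0"
    using ray_to_frontier[of \<Omega>0 x \<nu>] assms by (auto simp: interior_open)
  have not_in: "y \<in> frontier \<Omega>0 \<Longrightarrow> y \<notin> \<Omega>0" for y
    using frontier_disjoint_eq \<open>open \<Omega>0\<close> by blast
  have "exit_radius \<Omega>0 x \<nu> = d"
    unfolding exit_radius_def
  proof (rule the_equality)
    fix r assume r: "0 < r \<and> x + r *\<^sub>R \<nu> \<in> frontier \<Omega>0"
    have "\<not> r < d" using r inside not_in by force
    moreover have "\<not> d < r"
    proof
      assume "d < r"
      then have "x + d *\<^sub>R \<nu> \<in> open_segment x (x + r *\<^sub>R \<nu>)"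
        using ray_in_open_segment assms(5) d(1) by blast
      also have "\<dots> \<subseteq> \<Omega>0"
        using in_interior_closure_convex_segment[of \<Omega>0 x] assms r
        by (auto simp: interior_open frontier_def)
      finally show False using d(2) not_in by blast
    qed
    ultimately show "r = d" by linarith
  qed (use d in simp)
  with d inside show "0 < exit_radius \<Omega>0 x \<nu>" "x + exit_radius \<Omega>0 x \<nu> *\<^sub>R \<nu> \<in> frontier \<Omega>0"
    "\<And>s. 0 \<le> s \<Longrightarrow> s < exit_radius \<Omega>0 x \<nu> \<Longrightarrow> x + s *\<^sub>R \<nu> \<in> \<Omega>0" by simp_all
qed

lemma frontier_segment_avoiding_convex:
  fixes \<Omega>0 K :: "'a::euclidean_space set"
  assumes "open \<Omega>0" "bounded \<Omega>0" "convex \<Omega>0" "convex K" "closed K" "K \<noteq> {}"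
    and x: "x \<in> \<Omega>0 - K"
  obtains e where "e \<in> frontier \<Omega>0" "insert x (open_segment x e) \<subseteq> \<Omega>0 - K"
proof -
  have "x \<in> \<Omega>0" "x \<notin> K" using x by auto
  obtain a \<beta> where a: "a \<bullet> x < \<beta>" "\<And>k. k \<in> K \<Longrightarrow> \<beta> < a \<bullet> k"
    using separating_hyperplane_closed_point[OF assms(4,5) \<open>x \<notin> K\<close>] by blast
  have "a \<noteq> 0" using \<open>K \<noteq> {}\<close> a by fastforce
  define R where "R = exit_radius \<Omega>0 x (- a)"
  define e where "e = x + R *\<^sub>R (- a)"
  have "- a \<noteq> 0" using \<open>a \<noteq> 0\<close> by simp
  then have "0 < R" "e \<in> frontier \<Omega>0"
    using exit_radius[OF assms(1-3) \<open>x \<in> \<Omega>0\<close>] unfolding R_def e_def by blast+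
  have "a \<bullet> e < \<beta>"
  proof -
    have "a \<bullet> e = a \<bullet> x - R * (a \<bullet> a)"
      by (simp add: e_def inner_diff_right)
    moreover have "0 < R * (a \<bullet> a)"
      using \<open>0 < R\<close> \<open>a \<noteq> 0\<close> by (intro mult_pos_pos) simp_all
    ultimately show ?thesis using a(1) by linarith
  qed
  have "insert x (open_segment x e) \<subseteq> \<Omega>0 - K"
  proof
    fix y assume y: "y \<in> insert x (open_segment x e)"
    have "open_segment x e \<subseteq> \<Omega>0"
      using in_interior_closure_convex_segment[OF assms(3), of x e] \<open>x \<in> \<Omega>0\<close>
        \<open>e \<in> frontier \<Omega>0\<close> assms(1)
      by (simp add: interior_open frontier_def)
    then have "y \<in> \<Omega>0" using y \<open>x \<in> \<Omega>0\<close> by auto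
    have "closed_segment x e \<subseteq> {y. a \<bullet> y < \<beta>}"
      by (rule closed_segment_subset) (use a(1) \<open>a \<bullet> e < \<beta>\<close> in \<open>simp_all add: convex_halfspace_lt\<close>)
    then have "a \<bullet> y < \<beta>"
      using y segment_open_subset_closed[of x e] by auto
    then have "y \<notin> K" using a(2) by force
    with \<open>y \<in> \<Omega>0\<close> show "y \<in> \<Omega>0 - K" by blast
  qed
  with \<open>e \<in> frontier \<Omega>0\<close> show ?thesis by (rule that)
qed

lemma cball_tangent_halfspace_eq:
  fixes x q \<nu> :: "'a::real_inner"
  assumes "norm \<nu> = 1" "0 \<le> r" "q \<in> cball (x + r *\<^sub>R \<nu>) r" "\<nu> \<bullet> (q - x) \<le> 0"
  shows "q = x"
proof -
  define w where "w = q - x"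
  have "norm (r *\<^sub>R \<nu> - w) \<le> r"
    using assms(3) by (simp add: w_def dist_norm algebra_simps)
  then have "norm (r *\<^sub>R \<nu> - w) ^ 2 \<le> r ^ 2"
    by (simp add: power_mono)
  then have "(r *\<^sub>R \<nu> - w) \<bullet> (r *\<^sub>R \<nu> - w) \<le> r * r"
    by (simp add: dot_square_norm power2_eq_square)
  moreover have "\<nu> \<bullet> \<nu> = 1"
    using assms(1) by (simp add: norm_eq_1)
  ultimately have "w \<bullet> w \<le> 2 * r * (\<nu> \<bullet> w)"
    by (simp add: inner_diff inner_commute algebra_simps)
  also have "\<dots> \<le> 0"
    using assms(2,4) by (simp add: w_def mult_nonneg_nonpos)
  finally have "w \<bullet> w \<le> 0" .
  then have "w \<bullet> w = 0"
    using inner_ge_zero[of w] by linarith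
  then show ?thesis by (simp add: w_def)
qed

lemma normal_set_nonempty:
  assumes "convex {y\<in>\<Omega>0. u y > u x}"
  obtains \<nu> where "\<nu> \<in> normal_set u \<Omega>0 x"
proof -
  have "0 \<notin> (\<lambda>y. y - x) ` {y\<in>\<Omega>0. u y > u x}" by auto
  then obtain a where a: "a \<noteq> 0" "\<forall>z\<in>(\<lambda>y. y - x) ` {y\<in>\<Omega>0. u y > u x}. 0 \<le> a \<bullet> z"
    using separating_hyperplane_set_0 convex_translation_subtract[OF assms] by blast
  then have "- (1 / norm a) *\<^sub>R a \<in> normal_set u \<Omega>0 x"
    by (auto simp: normal_set_def)
  then show ?thesis by (rule that)
qed

lemma normal_set_nonpos_on_ascent:
  fixes u :: "'a::euclidean_space \<Rightarrow> real"
  assumes "open \<Omega>0" "x \<in> \<Omega>0" and Du: "(u has_derivative (\<lambda>h. D \<bullet> h)) (at x)"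
    and \<nu>: "\<nu> \<in> normal_set u \<Omega>0 x" and "0 < D \<bullet> w"
  shows "\<nu> \<bullet> w \<le> 0"
proof -
  obtain d where "0 < d" and increase: "\<And>h. 0 < h \<Longrightarrow> h < d \<Longrightarrow> u x < u (x + h *\<^sub>R w)"
    using DERIV_pos_inc_right[OF has_real_derivative_along_line[OF Du] \<open>0 < D \<bullet> w\<close>] by force
  have "((\<lambda>h. x + h *\<^sub>R w) \<longlongrightarrow> x) (at_right 0)"
    by (auto intro!: tendsto_eq_intros)
  then have "\<forall>\<^sub>F h in at_right 0. x + h *\<^sub>R w \<in> \<Omega>0"
    using assms(1,2) by (rule topological_tendstoD)
  moreover have "\<forall>\<^sub>F h in at_right 0. 0 < h \<and> h < d"
    using \<open>0 < d\<close> by (auto simp: eventually_at_right_field)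
  ultimately obtain h where "x + h *\<^sub>R w \<in> \<Omega>0" "0 < h" "h < d"
    using eventually_happens[OF eventually_conj] by fastforce
  then have "\<nu> \<bullet> (h *\<^sub>R w) \<le> 0"
    using \<nu> increase[of h] by (force simp: normal_set_def)
  with \<open>0 < h\<close> show ?thesis by (simp add: mult_le_0_iff)
qed

definition inf_subharmonic_visc :: "('a::euclidean_space \<Rightarrow> real) \<Rightarrow> 'a set \<Rightarrow> bool" where
  "inf_subharmonic_visc u U \<longleftrightarrow>
     (\<forall>x0\<in>U. \<forall>phi g H. C2_test phi x0 g H \<longrightarrow>
        (\<exists>e>0. \<forall>y\<in>ball x0 e \<inter> U. u y - phi y \<le> u x0 - phi x0) \<longrightarrow>
        H x0 (g x0) \<bullet> g x0 \<ge> 0)"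

definition inf_superharmonic_visc :: "('a::euclidean_space \<Rightarrow> real) \<Rightarrow> 'a set \<Rightarrow> bool" where
  "inf_superharmonic_visc u U \<longleftrightarrow>
     (\<forall>x0\<in>U. \<forall>phi g H. C2_test phi x0 g H \<longrightarrow>
        (\<exists>e>0. \<forall>y\<in>ball x0 e \<inter> U. u y - phi y \<ge> u x0 - phi x0) \<longrightarrow>
        H x0 (g x0) \<bullet> g x0 \<le> 0)"

lemma inf_harmonic_visc_iff:
  "inf_harmonic_visc u U \<longleftrightarrow>
     continuous_on U u \<and> inf_subharmonic_visc u U \<and> inf_superharmonic_visc u U"
  unfolding inf_harmonic_visc_def inf_subharmonic_visc_def inf_superharmonic_visc_def by blast

lemma C2_test_uminus:
  assumes "C2_test phi x0 g H"
  shows "C2_test (\<lambda>y. - phi y) x0 (\<lambda>y. - g y) (\<lambda>y v. - H y v)"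
proof -
  obtain e where "0 < e"
    and deriv: "\<And>y. y \<in> ball x0 e \<Longrightarrow>
      (phi has_derivative (\<lambda>h. g y \<bullet> h)) (at y) \<and> (g has_derivative H y) (at y)"
    and cont: "\<And>v. continuous_on (ball x0 e) (\<lambda>y. H y v)"
    using assms unfolding C2_test_def by blast
  show ?thesis
    unfolding C2_test_def
  proof (intro exI[of _ e] conjI ballI allI)
    fix y assume "y \<in> ball x0 e"
    then show "((\<lambda>y. - phi y) has_derivative (\<lambda>h. - g y \<bullet> h)) (at y)"
      and "((\<lambda>y. - g y) has_derivative (\<lambda>v. - H y v)) (at y)"
      using deriv has_derivative_minus by force+
  qed (use \<open>0 < e\<close> cont in \<open>auto intro: continuous_on_minus\<close>)
qed

lemma inf_superharmonic_visc_uminus: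
  assumes "inf_superharmonic_visc u U"
  shows "inf_subharmonic_visc (\<lambda>y. - u y) U"
  unfolding inf_subharmonic_visc_def
proof (intro ballI allI impI)
  fix x0 phi g H
  assume "x0 \<in> U" and test: "C2_test phi x0 g H"
    and "\<exists>e>0. \<forall>y\<in>ball x0 e \<inter> U. - u y - phi y \<le> - u x0 - phi x0"
  then have "- H x0 (- g x0) \<bullet> - g x0 \<le> 0"
    using assms C2_test_uminus[OF test] unfolding inf_superharmonic_visc_def by force
  moreover have "linear (H x0)"
    using test by (auto simp: C2_test_def intro: has_derivative_linear)
  ultimately show "0 \<le> H x0 (g x0) \<bullet> g x0"
    by (simp add: linear_neg)
qed

text \<open>The cone a + b|y - z| is \<infinity>-harmonic away from its vertex; subtracting \<epsilon>|y - z|^2 makes its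
  \<infinity>-Laplacian strictly negative, so it can be used as a strict test function.\<close>

definition perturbed_cone :: "real \<Rightarrow> real \<Rightarrow> real \<Rightarrow> 'a::euclidean_space \<Rightarrow> 'a \<Rightarrow> real" where
  "perturbed_cone a b \<epsilon> z y = a + b * norm (y - z) - \<epsilon> * ((y - z) \<bullet> (y - z))"

definition perturbed_cone_grad :: "real \<Rightarrow> real \<Rightarrow> 'a::euclidean_space \<Rightarrow> 'a \<Rightarrow> 'a" where
  "perturbed_cone_grad b \<epsilon> z y = (b / norm (y - z) - 2 * \<epsilon>) *\<^sub>R (y - z)"

definition perturbed_cone_hess :: "real \<Rightarrow> real \<Rightarrow> 'a::euclidean_space \<Rightarrow> 'a \<Rightarrow> 'a \<Rightarrow> 'a" where
  "perturbed_cone_hess b \<epsilon> z y v =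
     (b / norm (y - z) - 2 * \<epsilon>) *\<^sub>R v - (b / norm (y - z) ^ 3 * ((y - z) \<bullet> v)) *\<^sub>R (y - z)"

lemma has_derivative_norm_diff:
  fixes y z :: "'a::euclidean_space"
  assumes "y \<noteq> z"
  shows "((\<lambda>y. norm (y - z)) has_derivative (\<lambda>h. sgn (y - z) \<bullet> h)) (at y)"
proof -
  have "((\<lambda>y. y - z) has_derivative (\<lambda>h. h)) (at y)"
    by (rule derivative_eq_intros | simp)+
  moreover have "(norm has_derivative (\<lambda>h. sgn (y - z) \<bullet> h)) (at (y - z))"
    using has_derivative_norm[of "y - z"] assms by (simp add: inner_commute)
  ultimately show ?thesis
    using has_derivative_compose by fastforce
qed

lemma has_derivative_perturbed_cone:
  fixes y z :: "'a::euclidean_space"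
  assumes "y \<noteq> z"
  shows "(perturbed_cone a b \<epsilon> z has_derivative (\<lambda>h. perturbed_cone_grad b \<epsilon> z y \<bullet> h)) (at y)"
  unfolding perturbed_cone_def
  apply (rule has_derivative_eq_rhs)
   apply (rule derivative_eq_intros has_derivative_norm_diff[OF assms] | simp)+
  apply (auto simp: fun_eq_iff perturbed_cone_grad_def sgn_div_norm inner_commute algebra_simps
      divide_inverse)
  done

lemma has_derivative_perturbed_cone_grad:
  fixes y z :: "'a::euclidean_space"
  assumes "y \<noteq> z"
  shows "(perturbed_cone_grad b \<epsilon> z has_derivative perturbed_cone_hess b \<epsilon> z y) (at y)"
proof -
  have nz: "norm (y - z) \<noteq> 0" using assms by simp
  have "((\<lambda>y. (b * inverse (norm (y - z)) - 2 * \<epsilon>) *\<^sub>R (y - z)) has_derivative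
     (\<lambda>h. (b * (- (inverse (norm (y - z)) * (sgn (y - z) \<bullet> h) * inverse (norm (y - z))))) *\<^sub>R (y - z)
        + (b * inverse (norm (y - z)) - 2 * \<epsilon>) *\<^sub>R h)) (at y)"
    by (rule derivative_eq_intros has_derivative_norm_diff[OF assms] nz | simp)+
  moreover have "(\<lambda>h. (b * (- (inverse (norm (y - z)) * (sgn (y - z) \<bullet> h) * inverse (norm (y - z)))))
        *\<^sub>R (y - z) + (b * inverse (norm (y - z)) - 2 * \<epsilon>) *\<^sub>R h) = perturbed_cone_hess b \<epsilon> z y"
    using nz by (auto simp: perturbed_cone_hess_def sgn_div_norm inner_commute algebra_simps
        divide_inverse power3_eq_cube)
  ultimately show ?thesis
    unfolding perturbed_cone_grad_def by (simp add: divide_inverse)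
qed

lemma C2_test_perturbed_cone:
  fixes x0 z :: "'a::euclidean_space"
  assumes "x0 \<noteq> z"
  shows "C2_test (perturbed_cone a b \<epsilon> z) x0 (perturbed_cone_grad b \<epsilon> z) (perturbed_cone_hess b \<epsilon> z)"
  unfolding C2_test_def
proof (intro exI[of _ "norm (x0 - z)"] conjI ballI allI)
  show "0 < norm (x0 - z)" using assms by simp
  fix y assume "y \<in> ball x0 (norm (x0 - z))"
  then have "y \<noteq> z" by (auto simp: dist_norm norm_minus_commute)
  then show "(perturbed_cone a b \<epsilon> z has_derivative (\<lambda>h. perturbed_cone_grad b \<epsilon> z y \<bullet> h)) (at y)"
    "(perturbed_cone_grad b \<epsilon> z has_derivative perturbed_cone_hess b \<epsilon> z y) (at y)"
    using has_derivative_perturbed_cone has_derivative_perturbed_cone_grad by blast+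
next
  fix v
  have "\<forall>y\<in>ball x0 (norm (x0 - z)). norm (y - z) \<noteq> 0"
    by (auto simp: dist_norm norm_minus_commute)
  then show "continuous_on (ball x0 (norm (x0 - z))) (\<lambda>y. perturbed_cone_hess b \<epsilon> z y v)"
    unfolding perturbed_cone_hess_def by (intro continuous_intros) auto
qed

lemma perturbed_cone_inf_laplacian:
  fixes x0 z :: "'a::euclidean_space"
  assumes "x0 \<noteq> z"
  shows "perturbed_cone_hess b \<epsilon> z x0 (perturbed_cone_grad b \<epsilon> z x0) \<bullet> perturbed_cone_grad b \<epsilon> z x0
     = - 2 * \<epsilon> * (b / norm (x0 - z) - 2 * \<epsilon>)^2 * norm (x0 - z) ^ 2"
proof -
  define w where "w = x0 - z"
  define c where "c = b / norm w - 2 * \<epsilon>"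
  have nz: "norm w \<noteq> 0" using assms by (simp add: w_def)
  have ww: "w \<bullet> w = norm w ^ 2" by (simp add: power2_norm_eq_inner)
  have "perturbed_cone_hess b \<epsilon> z x0 (perturbed_cone_grad b \<epsilon> z x0) \<bullet> perturbed_cone_grad b \<epsilon> z x0
      = c * c * c * (w \<bullet> w) - b / norm w ^ 3 * (c * (w \<bullet> w)) * c * (w \<bullet> w)"
    unfolding perturbed_cone_hess_def perturbed_cone_grad_def w_def[symmetric] c_def[symmetric]
    by (simp add: inner_diff_left algebra_simps)
  also have "\<dots> = c^2 * norm w ^ 2 * (c - b / norm w)"
    using nz by (simp add: ww power2_eq_square power3_eq_cube field_simps)
  also have "\<dots> = - 2 * \<epsilon> * c^2 * norm w ^ 2" by (simp add: c_def algebra_simps)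
  finally show ?thesis by (simp add: c_def w_def)
qed

lemma inf_subharmonic_visc_no_perturbed_cone_max:
  fixes u :: "'a::euclidean_space \<Rightarrow> real"
  assumes sub: "inf_subharmonic_visc u U" and "x0 \<in> U" "x0 \<noteq> z" "0 < \<epsilon>"
    and "2 * \<epsilon> * norm (x0 - z) < b"
    and max: "\<exists>e>0. \<forall>y\<in>ball x0 e \<inter> U.
      u y - perturbed_cone a b \<epsilon> z y \<le> u x0 - perturbed_cone a b \<epsilon> z x0"
  shows False
proof -
  have "0 \<le> perturbed_cone_hess b \<epsilon> z x0 (perturbed_cone_grad b \<epsilon> z x0) \<bullet> perturbed_cone_grad b \<epsilon> z x0"
    using sub \<open>x0 \<in> U\<close> C2_test_perturbed_cone[OF \<open>x0 \<noteq> z\<close>] max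
    unfolding inf_subharmonic_visc_def by blast
  moreover have "b / norm (x0 - z) - 2 * \<epsilon> \<noteq> 0"
    using assms(3,5) by (simp add: field_simps)
  ultimately show False
    using assms(3,4) by (simp add: perturbed_cone_inf_laplacian mult_le_0_iff)
qed

lemma continuous_on_closure_attains_interior_max:
  fixes f :: "'a::euclidean_space \<Rightarrow> real"
  assumes "open V" "bounded V" "continuous_on (closure V) f" "y0 \<in> V"
    and "\<And>y. y \<in> frontier V \<Longrightarrow> f y < f y0"
  obtains x0 where "x0 \<in> V" "\<And>y. y \<in> closure V \<Longrightarrow> f y \<le> f x0"
proof -
  have "closure V \<noteq> {}" using \<open>y0 \<in> V\<close> closure_subset by blast
  then obtain x0 where x0: "x0 \<in> closure V" and max: "\<And>y. y \<in> closure V \<Longrightarrow> f y \<le> f x0"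
    using continuous_attains_sup[of "closure V" f] assms(2,3) by (auto simp: compact_closure)
  have "f y0 \<le> f x0" using max \<open>y0 \<in> V\<close> closure_subset by blast
  then have "x0 \<notin> frontier V" using assms(5) by force
  then have "x0 \<in> V" using x0 \<open>open V\<close> by (simp add: frontier_def interior_open)
  then show ?thesis using max by (rule that)
qed

lemma inf_subharmonic_visc_le_cone:
  fixes u :: "'a::euclidean_space \<Rightarrow> real"
  assumes sub: "inf_subharmonic_visc u U" and "V \<subseteq> U" "open V" "bounded V" "z \<notin> V" "0 < b"
    and cont: "continuous_on (closure V) u"
    and bd: "\<And>y. y \<in> frontier V \<Longrightarrow> u y \<le> a + b * norm (y - z)"
    and "y0 \<in> V"
  shows "u y0 \<le> a + b * norm (y0 - z)"
proof (rule ccontr)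
  assume "\<not> ?thesis"
  then have "0 < u y0 - a - b * norm (y0 - z)" by simp
  then obtain \<delta> where \<delta>: "0 < \<delta>" "\<delta> = u y0 - a - b * norm (y0 - z)" by blast
  obtain M where "0 < M" "closure V \<subseteq> ball z M"
    using bounded_subset_ballD[OF bounded_closure[OF \<open>bounded V\<close>]] by blast
  then have norm_le_M: "norm (y - z) \<le> M" if "y \<in> closure V" for y
    using that by (auto simp: dist_norm norm_minus_commute)
  define \<epsilon> where "\<epsilon> = min (b / (4 * M)) (\<delta> / (2 * M^2))"
  have "0 < \<epsilon>" using \<open>0 < M\<close> \<delta> \<open>0 < b\<close> by (simp add: \<epsilon>_def)
  define f where "f y = u y - perturbed_cone a b \<epsilon> z y" for y
  have small: "\<epsilon> * ((y - z) \<bullet> (y - z)) \<le> \<delta> / 2" if "y \<in> closure V" for y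
  proof -
    have "\<epsilon> * ((y - z) \<bullet> (y - z)) \<le> \<delta> / (2 * M^2) * M^2"
      using norm_le_M[OF that] \<open>0 < M\<close> \<open>0 < \<epsilon>\<close>
      by (intro mult_mono) (auto simp: \<epsilon>_def dot_square_norm power_mono)
    then show ?thesis using \<open>0 < M\<close> by simp
  qed
  have "\<delta> \<le> f y0"
    using \<delta> \<open>0 < \<epsilon>\<close> by (simp add: f_def perturbed_cone_def)
  \<comment> \<open>The perturbation is too small to create a maximum on the boundary.\<close>
  have "f y < f y0" if "y \<in> frontier V" for y
  proof -
    have "y \<in> closure V" using that by (simp add: frontier_def)
    then have "f y \<le> \<delta> / 2"
      using bd[OF that] small[of y] unfolding f_def perturbed_cone_def by linarith
    then show ?thesis using \<open>\<delta> \<le> f y0\<close> \<open>0 < \<delta>\<close> by linarith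
  qed
  moreover have "continuous_on (closure V) f"
    unfolding f_def perturbed_cone_def by (intro continuous_intros cont)
  ultimately obtain x0 where "x0 \<in> V" and max: "\<And>y. y \<in> closure V \<Longrightarrow> f y \<le> f x0"
    using continuous_on_closure_attains_interior_max[OF \<open>open V\<close> \<open>bounded V\<close> _ \<open>y0 \<in> V\<close>]
    by blast
  then have x0: "x0 \<in> closure V" using closure_subset by blast
  obtain e where "0 < e" "ball x0 e \<subseteq> V"
    using \<open>open V\<close> \<open>x0 \<in> V\<close> open_contains_ball by blast
  then have "\<exists>e>0. \<forall>y\<in>ball x0 e \<inter> U. f y \<le> f x0"
    using max closure_subset by blast
  moreover have "2 * \<epsilon> * norm (x0 - z) < b"
  proof -
    have "2 * \<epsilon> * norm (x0 - z) \<le> 2 * (b / (4 * M)) * M"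
      using norm_le_M[OF x0] \<open>0 < \<epsilon>\<close> by (intro mult_mono) (auto simp: \<epsilon>_def)
    then show ?thesis using \<open>0 < M\<close> \<open>0 < b\<close> by simp
  qed
  moreover have "x0 \<noteq> z" using \<open>x0 \<in> V\<close> \<open>z \<notin> V\<close> by blast
  ultimately show False
    using inf_subharmonic_visc_no_perturbed_cone_max[OF sub _ _ \<open>0 < \<epsilon>\<close>] \<open>x0 \<in> V\<close> \<open>V \<subseteq> U\<close>
    unfolding f_def by blast
qed

lemma inf_subharmonic_visc_le_cone_cball:
  fixes u :: "'a::euclidean_space \<Rightarrow> real"
  assumes sub: "inf_subharmonic_visc u U" and "open U" and cont: "continuous_on (closure U) u"
    and "0 \<le> b"
    and bd: "\<And>q. q \<in> cball z \<rho> \<Longrightarrow> q \<notin> ball z \<rho> \<inter> U - {z} \<Longrightarrow> u q \<le> a + b * norm (q - z)"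
    and y: "y \<in> cball z \<rho>"
  shows "u y \<le> a + b * norm (y - z)"
proof (cases "y \<in> ball z \<rho> \<inter> U - {z}")
  case False
  then show ?thesis using bd y by blast
next
  case True
  define V where "V = ball z \<rho> \<inter> U - {z}"
  have "open V" unfolding V_def using \<open>open U\<close> by (intro open_Diff open_Int) auto
  have "closure V \<subseteq> cball z \<rho>"
    by (rule closure_minimal) (auto simp: V_def)
  have bd_V: "u q \<le> a + b * norm (q - z)" if "q \<in> frontier V" for q
  proof -
    have "q \<in> closure V" "q \<notin> V"
      using that \<open>open V\<close> by (simp_all add: frontier_def interior_open)
    then show ?thesis
      using bd \<open>closure V \<subseteq> cball z \<rho>\<close> unfolding V_def by blast
  qed
  have "0 < norm (y - z)" using True by simp
  show ?thesis
  proof (rule field_le_epsilon)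
    fix e :: real assume "0 < e"
    have "u y \<le> a + (b + e / norm (y - z)) * norm (y - z)"
    proof (rule inf_subharmonic_visc_le_cone[OF sub])
      show "V \<subseteq> U" "z \<notin> V" by (auto simp: V_def)
      show "bounded V" unfolding V_def by (rule bounded_subset[OF bounded_ball]) auto
      show "continuous_on (closure V) u"
        using cont by (rule continuous_on_subset) (auto simp: V_def intro!: closure_mono)
      show "0 < b + e / norm (y - z)"
        using \<open>0 \<le> b\<close> \<open>0 < e\<close> \<open>0 < norm (y - z)\<close> by (simp add: add_nonneg_pos)
      show "u q \<le> a + (b + e / norm (y - z)) * norm (q - z)" if "q \<in> frontier V" for q
      proof -
        have "b * norm (q - z) \<le> (b + e / norm (y - z)) * norm (q - z)"
          using \<open>0 < e\<close> \<open>0 < norm (y - z)\<close> by (intro mult_right_mono) simp_all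
        then show ?thesis using bd_V[OF that] by linarith
      qed
      show "open V" "y \<in> V" by (fact \<open>open V\<close>) (use True in \<open>simp add: V_def\<close>)
    qed
    then show "u y \<le> a + b * norm (y - z) + e"
      using \<open>0 < norm (y - z)\<close> by (simp add: algebra_simps)
  qed
qed

lemma inf_superharmonic_visc_ge_cone_cball:
  fixes u :: "'a::euclidean_space \<Rightarrow> real"
  assumes super: "inf_superharmonic_visc u U" and "open U" and cont: "continuous_on (closure U) u"
    and "0 \<le> b"
    and bd: "\<And>q. q \<in> cball z \<rho> \<Longrightarrow> q \<notin> ball z \<rho> \<inter> U - {z} \<Longrightarrow> a - b * norm (q - z) \<le> u q"
    and y: "y \<in> cball z \<rho>"
  shows "a - b * norm (y - z) \<le> u y"
  using inf_subharmonic_visc_le_cone_cball[OF inf_superharmonic_visc_uminus[OF super] \<open>open U\<close>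
      continuous_on_minus[OF cont] \<open>0 \<le> b\<close>, of z \<rho> "- a" y] bd y
  by force

locale convex_ring_potential =
  fixes \<Omega>0 K :: "'a::euclidean_space set" and u :: "'a \<Rightarrow> real"
  assumes open_outer: "open \<Omega>0" and bounded_outer: "bounded \<Omega>0" and convex_outer: "convex \<Omega>0"
    and compact_inner: "compact K" and convex_inner: "convex K" and inner_nonempty: "K \<noteq> {}"
    and inner_subset: "K \<subseteq> \<Omega>0"
    and continuous: "continuous_on (closure (\<Omega>0 - K)) u"
    and inf_harmonic: "inf_harmonic_visc u (\<Omega>0 - K)"
    and eq_1_inner: "\<And>y. y \<in> K \<Longrightarrow> u y = 1"
    and eq_0_outside: "\<And>y. y \<notin> \<Omega>0 \<Longrightarrow> u y = 0"
begin

lemma open_ring: "open (\<Omega>0 - K)"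
  using open_outer compact_inner by (simp add: compact_imp_closed open_Diff)

lemma subharmonic: "inf_subharmonic_visc u (\<Omega>0 - K)"
  and superharmonic: "inf_superharmonic_visc u (\<Omega>0 - K)"
  using inf_harmonic by (simp_all add: inf_harmonic_visc_iff)

lemma le_cone_cball:
  assumes "0 \<le> b"
    and "\<And>q. q \<in> cball z \<rho> \<Longrightarrow> q \<notin> ball z \<rho> \<inter> (\<Omega>0 - K) - {z} \<Longrightarrow> u q \<le> a + b * norm (q - z)"
    and "y \<in> cball z \<rho>"
  shows "u y \<le> a + b * norm (y - z)"
  by (rule inf_subharmonic_visc_le_cone_cball[OF subharmonic open_ring continuous assms])

lemma ge_cone_cball:
  assumes "0 \<le> b"
    and "\<And>q. q \<in> cball z \<rho> \<Longrightarrow> q \<notin> ball z \<rho> \<inter> (\<Omega>0 - K) - {z} \<Longrightarrow> a - b * norm (q - z) \<le> u q"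
    and "y \<in> cball z \<rho>"
  shows "a - b * norm (y - z) \<le> u y"
  by (rule inf_superharmonic_visc_ge_cone_cball[OF superharmonic open_ring continuous assms])

lemma bounds_off_ring: "y \<notin> \<Omega>0 - K \<Longrightarrow> 0 \<le> u y \<and> u y \<le> 1"
  using eq_0_outside eq_1_inner by (cases "y \<in> \<Omega>0") auto

text \<open>Both bounds are comparisons with a flat cone whose ball contains \<Omega>0.\<close>

lemma le_1: "u y \<le> 1"
  and ge_0: "0 \<le> u y"
proof -
  obtain k where k: "k \<in> K" using inner_nonempty by blast
  obtain \<rho> where \<rho>: "\<Omega>0 \<subseteq> ball k \<rho>" using bounded_subset_ballD[OF bounded_outer] by blast
  have off: "0 \<le> u q \<and> u q \<le> 1" if "q \<notin> ball k \<rho> \<inter> (\<Omega>0 - K) - {k}" for q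
    using that k \<rho> bounds_off_ring[of q] by blast
  have "y \<in> cball k \<rho> \<or> y \<notin> \<Omega>0 - K" using \<rho> by auto
  then show "u y \<le> 1" "0 \<le> u y"
    using le_cone_cball[of 0 k \<rho> 1] ge_cone_cball[of 0 k \<rho> 0] off bounds_off_ring[of y] by auto
qed

lemma pos_on_ball:
  assumes "ball w \<rho> \<subseteq> \<Omega>0" "0 < u w" "y \<in> ball w \<rho>"
  shows "0 < u y"
proof -
  have "0 < \<rho>" using assms(3) le_less_trans[OF zero_le_dist] by (simp only: mem_ball)
  have "u w - u w / \<rho> * norm (y - w) \<le> u y"
  proof (rule ge_cone_cball[of _ w \<rho>])
    fix q assume q: "q \<in> cball w \<rho>" "q \<notin> ball w \<rho> \<inter> (\<Omega>0 - K) - {w}"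
    consider "q = w" | "q \<notin> ball w \<rho>" | "q \<in> K"
      using q assms(1) by blast
    then show "u w - u w / \<rho> * norm (q - w) \<le> u q"
    proof cases
      case 2
      then have "norm (q - w) = \<rho>" using q(1) by (simp add: dist_norm norm_minus_commute)
      then show ?thesis using \<open>0 < \<rho>\<close> ge_0[of q] by simp
    next
      case 3
      moreover have "0 \<le> u w / \<rho> * norm (q - w)"
        using assms(2) \<open>0 < \<rho>\<close> by simp
      ultimately show ?thesis using eq_1_inner le_1[of w] by simp
    qed simp
  qed (use assms(2,3) \<open>0 < \<rho>\<close> in auto)
  moreover have "u w / \<rho> * norm (y - w) < u w / \<rho> * \<rho>"
    using assms(2,3) \<open>0 < \<rho>\<close> by (intro mult_strict_left_mono) (simp_all add: dist_norm norm_minus_commute)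
  ultimately show ?thesis using \<open>0 < \<rho>\<close> by simp
qed

lemma lt_1_on_ball:
  assumes "ball w \<rho> \<subseteq> \<Omega>0 - K" "u w < 1" "y \<in> ball w \<rho>"
  shows "u y < 1"
proof -
  have "0 < \<rho>" using assms(3) le_less_trans[OF zero_le_dist] by (simp only: mem_ball)
  have "u y \<le> u w + (1 - u w) / \<rho> * norm (y - w)"
  proof (rule le_cone_cball[of _ w \<rho>])
    fix q assume q: "q \<in> cball w \<rho>" "q \<notin> ball w \<rho> \<inter> (\<Omega>0 - K) - {w}"
    then consider "q = w" | "norm (q - w) = \<rho>"
      using assms(1) by (force simp: dist_norm norm_minus_commute)
    then show "u q \<le> u w + (1 - u w) / \<rho> * norm (q - w)"
      by cases (use \<open>0 < \<rho>\<close> le_1[of q] in simp_all)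
  qed (use assms(2,3) \<open>0 < \<rho>\<close> in auto)
  moreover have "(1 - u w) / \<rho> * norm (y - w) < (1 - u w) / \<rho> * \<rho>"
    using assms(2,3) \<open>0 < \<rho>\<close> by (intro mult_strict_left_mono) (simp_all add: dist_norm norm_minus_commute)
  ultimately show ?thesis using \<open>0 < \<rho>\<close> by simp
qed

lemma pos:
  assumes "y \<in> \<Omega>0"
  shows "0 < u y"
proof -
  obtain k where "k \<in> K" using inner_nonempty by blast
  then have "k \<in> \<Omega>0" "0 < u k" using inner_subset eq_1_inner by auto
  moreover have "(\<forall>y\<in>\<Omega>0. 0 < u y) \<or> (\<forall>y\<in>\<Omega>0. \<not> 0 < u y)"
    using open_outer convex_connected[OF convex_outer] pos_on_ball
    by (intro connected_ball_propagation) blast+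
  ultimately show ?thesis using assms by blast
qed

text \<open>Follow a ray from x away from K to the boundary of \<Omega>0: if u reached 1 on it, it would stay
  1 up to the boundary point, where u vanishes.\<close>

lemma lt_1:
  assumes x: "x \<in> \<Omega>0 - K"
  shows "u x < 1"
proof -
  obtain e where e: "e \<in> frontier \<Omega>0" and "insert x (open_segment x e) \<subseteq> \<Omega>0 - K"
    using frontier_segment_avoiding_convex[OF open_outer bounded_outer convex_outer convex_inner
        compact_imp_closed[OF compact_inner] inner_nonempty] x by blast
  define S where "S = insert x (open_segment x e)"
  have "S \<subseteq> \<Omega>0 - K" unfolding S_def by fact
  have "e \<notin> \<Omega>0"
    using e frontier_disjoint_eq open_outer by blast
  then have "x \<noteq> e" using x by blast
  have "closure S = closed_segment x e"
    using \<open>x \<noteq> e\<close> by (simp add: S_def closure_insert insert_absorb)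
  have "connected S"
  proof (rule connected_intermediate_closure[of "open_segment x e"])
    show "connected (open_segment x e)" by (rule convex_connected[OF convex_open_segment])
  qed (use \<open>x \<noteq> e\<close> segment_open_subset_closed in \<open>auto simp: S_def\<close>)
  have "(\<forall>y\<in>S. u y < 1) \<or> (\<forall>y\<in>S. \<not> u y < 1)"
    using open_ring \<open>connected S\<close> \<open>S \<subseteq> \<Omega>0 - K\<close> lt_1_on_ball by (rule connected_ball_propagation)
  moreover have "\<not> (\<forall>y\<in>S. \<not> u y < 1)"
  proof
    assume "\<forall>y\<in>S. \<not> u y < 1"
    then have "\<And>y. y \<in> S \<Longrightarrow> u y = 1" using le_1 by (meson not_less order_antisym)
    moreover have "continuous_on (closure S) u"
      using continuous by (rule continuous_on_subset) (rule closure_mono[OF \<open>S \<subseteq> \<Omega>0 - K\<close>])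
    moreover have "e \<in> closure S"
      using \<open>closure S = closed_segment x e\<close> by simp
    ultimately have "u e = 1" using continuous_constant_on_closure by blast
    then show False using eq_0_outside \<open>e \<notin> \<Omega>0\<close> by simp
  qed
  ultimately show ?thesis unfolding S_def by blast
qed

lemma le_on_tangent_cball:
  assumes "\<nu> \<in> normal_set u \<Omega>0 x" "x \<in> \<Omega>0" "0 \<le> r" "q \<in> cball (x + r *\<^sub>R \<nu>) r"
  shows "u q \<le> u x"
proof (rule ccontr)
  assume "\<not> u q \<le> u x"
  moreover from this have "q \<in> \<Omega>0" using pos[OF assms(2)] eq_0_outside by force
  ultimately have "q = x"
    using assms cball_tangent_halfspace_eq[of \<nu> r q x] by (auto simp: normal_set_def)
  with \<open>\<not> u q \<le> u x\<close> show False by simp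
qed

lemma le_cone_tangent_cball:
  assumes \<nu>: "\<nu> \<in> normal_set u \<Omega>0 x" and x: "x \<in> \<Omega>0 - K" and "0 < r"
    and y: "y \<in> cball (x + r *\<^sub>R \<nu>) r"
  defines "p \<equiv> x + r *\<^sub>R \<nu>"
  shows "u y \<le> u p + (u x - u p) / r * norm (y - p)"
proof (rule le_cone_cball)
  have le_x: "u q \<le> u x" if "q \<in> cball p r" for q
    using le_on_tangent_cball[OF \<nu>, of r q] x \<open>0 < r\<close> that by (simp add: p_def)
  then show "0 \<le> (u x - u p) / r" using \<open>0 < r\<close> by simp
  fix q assume q: "q \<in> cball p r" "q \<notin> ball p r \<inter> (\<Omega>0 - K) - {p}"
  consider "q = p" | "norm (q - p) = r" | "q \<notin> \<Omega>0" | "q \<in> K"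
    using q by (auto simp: dist_norm norm_minus_commute)
  then show "u q \<le> u p + (u x - u p) / r * norm (q - p)"
  proof cases
    case 2
    then show ?thesis using le_x[OF q(1)] \<open>0 < r\<close> by simp
  next
    case 3
    moreover have "0 \<le> (u x - u p) / r * norm (q - p)"
      using \<open>0 \<le> (u x - u p) / r\<close> norm_ge_zero by (rule mult_nonneg_nonneg)
    ultimately show ?thesis
      using eq_0_outside ge_0[of p] by simp
  next
    case 4
    then show ?thesis using eq_1_inner le_x[OF q(1)] lt_1[OF x] by simp
  qed simp
qed (use y in \<open>simp add: p_def\<close>)

lemma exit_radius_normal:
  assumes "\<nu> \<in> normal_set u \<Omega>0 x" "x \<in> \<Omega>0"
  shows "0 < exit_radius \<Omega>0 x \<nu>" and "u (x + exit_radius \<Omega>0 x \<nu> *\<^sub>R \<nu>) = 0"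
proof -
  have "\<nu> \<noteq> 0" using assms(1) by (auto simp: normal_set_def)
  then have "0 < exit_radius \<Omega>0 x \<nu>" "x + exit_radius \<Omega>0 x \<nu> *\<^sub>R \<nu> \<in> frontier \<Omega>0"
    using exit_radius[OF open_outer bounded_outer convex_outer assms(2)] by blast+
  then show "0 < exit_radius \<Omega>0 x \<nu>" "u (x + exit_radius \<Omega>0 x \<nu> *\<^sub>R \<nu>) = 0"
    using frontier_disjoint_eq open_outer eq_0_outside by blast+
qed

lemma slope_along_normal:
  assumes \<nu>: "\<nu> \<in> normal_set u \<Omega>0 x" and x: "x \<in> \<Omega>0 - K"
    and r: "0 < r" "r \<le> exit_radius \<Omega>0 x \<nu>"
    and Du: "(u has_derivative (\<lambda>h. D \<bullet> h)) (at x)"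
  shows "0 < (u x - u (x + r *\<^sub>R \<nu>)) / r" and "(u x - u (x + r *\<^sub>R \<nu>)) / r \<le> - (D \<bullet> \<nu>)"
proof -
  have "norm \<nu> = 1" using \<nu> by (simp add: normal_set_def)
  have dist_on_ray: "norm (x + s *\<^sub>R \<nu> - (x + t *\<^sub>R \<nu>)) = t - s" if "s \<le> t" for s t
    using that \<open>norm \<nu> = 1\<close> by (simp flip: scaleR_diff_left)
  define R where "R = exit_radius \<Omega>0 x \<nu>"
  have "x \<in> \<Omega>0" using x by blast
  then have "0 < R" "u (x + R *\<^sub>R \<nu>) = 0"
    using exit_radius_normal[OF \<nu>] unfolding R_def by blast+
  \<comment> \<open>The cone with vertex at the exit point, where u vanishes.\<close>
  have "u (x + r *\<^sub>R \<nu>) \<le> u (x + R *\<^sub>R \<nu>) + (u x - u (x + R *\<^sub>R \<nu>)) / R * (R - r)"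
    using le_cone_tangent_cball[OF \<nu> x \<open>0 < R\<close>, of "x + r *\<^sub>R \<nu>"] dist_on_ray[of r R] r
    by (simp add: R_def dist_norm norm_minus_commute)
  also have "\<dots> < u x"
    using \<open>u (x + R *\<^sub>R \<nu>) = 0\<close> pos[OF \<open>x \<in> \<Omega>0\<close>] r(1) \<open>0 < R\<close> by (simp add: field_simps)
  finally show "0 < (u x - u (x + r *\<^sub>R \<nu>)) / r" using r(1) by simp
  define m where "m = (u x - u (x + r *\<^sub>R \<nu>)) / r"
  have "u (x + e *\<^sub>R \<nu>) \<le> u (x + 0 *\<^sub>R \<nu>) + - m * e" if "0 < e" "e \<le> r" for e
  proof -
    have "u (x + e *\<^sub>R \<nu>) \<le> u (x + r *\<^sub>R \<nu>) + m * (r - e)"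
      using le_cone_tangent_cball[OF \<nu> x r(1), of "x + e *\<^sub>R \<nu>"] dist_on_ray[of e r] that
      by (simp add: m_def dist_norm norm_minus_commute)
    also have "\<dots> = u x - m * e"
      using r(1) by (simp add: m_def field_simps)
    finally show ?thesis by simp
  qed
  then have "D \<bullet> \<nu> \<le> - m"
    using has_real_derivative_le_of_slope_bound[OF has_real_derivative_along_line[OF Du] r(1)]
    by blast
  then show "(u x - u (x + r *\<^sub>R \<nu>)) / r \<le> - (D \<bullet> \<nu>)" by (simp add: m_def)
qed

lemma normal_set_eq_neg_grad:
  assumes x: "x \<in> \<Omega>0 - K" and Du: "(u has_derivative (\<lambda>h. D \<bullet> h)) (at x)"
    and "convex {y\<in>\<Omega>0. u y > u x}"
  shows "D \<noteq> 0" and "normal_set u \<Omega>0 x = {- (1 / norm D) *\<^sub>R D}"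
proof -
  have "x \<in> \<Omega>0" using x by blast
  obtain \<nu>0 where \<nu>0: "\<nu>0 \<in> normal_set u \<Omega>0 x"
    using normal_set_nonempty[OF assms(3)] by blast
  then show "D \<noteq> 0"
    using slope_along_normal[OF \<nu>0 x exit_radius_normal(1)[OF \<nu>0 \<open>x \<in> \<Omega>0\<close>] order_refl Du]
    by auto
  then have "\<nu> = - (1 / norm D) *\<^sub>R D" if "\<nu> \<in> normal_set u \<Omega>0 x" for \<nu>
    using that by (intro unit_vector_eq_neg_direction normal_set_nonpos_on_ascent[OF open_outer
        \<open>x \<in> \<Omega>0\<close> Du that]) (simp_all add: normal_set_def)
  with \<nu>0 show "normal_set u \<Omega>0 x = {- (1 / norm D) *\<^sub>R D}" by blast
qed

end

theorem lemma4p1: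
  fixes \<Omega>0 K :: "'a::euclidean_space set" and u :: "'a \<Rightarrow> real"
  assumes dim: "DIM('a) \<ge> 2"
    and O0: "open \<Omega>0" "connected \<Omega>0" "bounded \<Omega>0" "convex \<Omega>0"
    and K: "compact K" "convex K" "K \<noteq> {}" "K \<subseteq> \<Omega>0"
    and cont: "continuous_on (closure (\<Omega>0 - K)) u"
    and visc: "inf_harmonic_visc u (\<Omega>0 - K)"
    and u1: "\<And>y. y \<in> K \<Longrightarrow> u y = 1"
    and u0: "\<And>y. y \<notin> \<Omega>0 \<Longrightarrow> u y = 0"
    and diff: "\<And>y. y \<in> \<Omega>0 - K \<Longrightarrow> u differentiable (at y)"
    and lvl: "\<And>t. convex {y\<in>\<Omega>0. u y > t}"
    and x: "x \<in> \<Omega>0 - K"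
  shows "(\<forall>\<nu>\<in>normal_set u \<Omega>0 x. \<forall>r. 0 < r \<and> r \<le> exit_radius \<Omega>0 x \<nu> \<longrightarrow>
            - (grad u x \<bullet> \<nu>) \<ge> (u x - u (x + r *\<^sub>R \<nu>)) / r
            \<and> (u x - u (x + r *\<^sub>R \<nu>)) / r > 0)
       \<and> normal_set u \<Omega>0 x = {- (1 / norm (grad u x)) *\<^sub>R grad u x}
       \<and> (\<forall>r. 0 < r \<and> r \<le> exit_radius \<Omega>0 x (- (1 / norm (grad u x)) *\<^sub>R grad u x) \<longrightarrow>
            norm (grad u x) \<ge> (u x - u (x + r *\<^sub>R (- (1 / norm (grad u x)) *\<^sub>R grad u x))) / r)
       \<and> norm (grad u x) \<ge> u x / exit_radius \<Omega>0 x (- (1 / norm (grad u x)) *\<^sub>R grad u x)"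
proof -
  interpret convex_ring_potential \<Omega>0 K u
    using O0 K cont visc u1 u0 by unfold_locales
  define D where "D = grad u x"
  define \<nu>x where "\<nu>x = - (1 / norm D) *\<^sub>R D"
  have "x \<in> \<Omega>0" using x by blast
  have Du: "(u has_derivative (\<lambda>h. D \<bullet> h)) (at x)"
    using has_derivative_grad[OF diff[OF x]] by (simp add: D_def)
  note slope = slope_along_normal[OF _ x _ _ Du]
  note N = normal_set_eq_neg_grad[OF x Du lvl, folded \<nu>x_def]
  have "- (D \<bullet> \<nu>x) = norm D"
    using N(1) by (simp add: \<nu>x_def power2_norm_eq_inner[symmetric] power2_eq_square)
  then have grad_bound: "(u x - u (x + r *\<^sub>R \<nu>x)) / r \<le> norm D"
    if "0 < r" "r \<le> exit_radius \<Omega>0 x \<nu>x" for r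
    using slope(2)[of \<nu>x r] N(2) that by simp
  have "\<nu>x \<in> normal_set u \<Omega>0 x" using N(2) by simp
  note exit = exit_radius_normal[OF this \<open>x \<in> \<Omega>0\<close>]
  have "u x / exit_radius \<Omega>0 x \<nu>x \<le> norm D"
    using grad_bound[OF exit(1) order_refl] exit(2) by simp
  with N(2) grad_bound slope show ?thesis
    unfolding D_def[symmetric] \<nu>x_def[symmetric] by blast
qed

end
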